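(* Let $p=(z_0,\tau_0,0)\in\mathcal{C}$. Then $\mathcal{H}(p)\cap\mathcal{C}=\{p\}$ if and only if $\tau_0=0$ (i.e. $p\in\mathcal{E}$), and in that case $\mathcal{H}(p)$ is tangent to $\mathcal{C}$ at $p$ (the derivative $dY/dz$ along $\mathcal{H}(p)$ vanishes at $z=z_0$). If $\tau_0\neq 0$, then $\mathcal{H}(p)\cap\mathcal{C}$ consists of exactly two points, namely $p$ and the point with $z$-coordinate $z_1=-\dfrac{\tau_0(1+z_0^2)-z_0}{\tau_0z_0(1+z_0^2)+1}$ (interpreted at $z=\infty$ if the denominator vanishes), and $\mathcal{H}(p)$ crosses $\mathcal{C}$ transversally at $p$, with $dY/dz=-2c\tau_0(1+z_0^2)/[1+(b_1-1)z_0^2]$ there.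
   Context: Fix real constants $a_1,a_2,a_3,a_4$ and $b_1>1$, and put $c=a_3-a_2$, assumed $>0$. Flux $F=(f,g)$, $f(u,v)=(b_1+1)u^2/2+v^2/2+a_1u+a_2v$, $g(u,v)=uv+a_3u+a_4v$. Coordinates $(z,\tau,Y)\in\mathbb{R}^3$. Define $\widetilde U(z,\tau)=\frac{2cz}{z^2+1}+c\tau(z^2-1)$, $V_1(z,\tau)=\frac{c}{z^2+1}+c\tau z$, $U=(\widetilde U-a_1+a_4)/b_1$, $V=V_1-a_3$. The point $(z,\tau,Y)$ has left state $W=(U+zY/2,\,V+Y/2)$ and right state $W'=(U-zY/2,\,V-Y/2)$. For $p\in\mathbb{R}^3$, $\mathcal{H}(p)=\{q: W(q)=W(p)\}$; it is the graph over $z\in\mathbb{R}$ of a smooth map $z\mapsto(\tau(z),Y(z))$. The characteristic plane is $\mathcal{C}=\{Y=0\}$ and the coincidence curve is $\mathcal{E}=\{Y=0,\tau=0\}$. *)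

theory Defs
  imports "HOL-Analysis.Analysis"
begin

definition cpar :: "real \<Rightarrow> real \<Rightarrow> real" where
  "cpar a2 a3 = a3 - a2"

definition Utilde :: "real \<Rightarrow> real \<Rightarrow> real \<Rightarrow> real" where
  "Utilde c z \<tau> = 2 * c * z / (z\<^sup>2 + 1) + c * \<tau> * (z\<^sup>2 - 1)"

definition V1 :: "real \<Rightarrow> real \<Rightarrow> real \<Rightarrow> real" where
  "V1 c z \<tau> = c / (z\<^sup>2 + 1) + c * \<tau> * z"

definition Uf :: "real \<Rightarrow> real \<Rightarrow> real \<Rightarrow> real \<Rightarrow> real \<Rightarrow> real \<Rightarrow> real \<Rightarrow> real" where
  "Uf a1 a2 a3 a4 b1 z \<tau> = (Utilde (cpar a2 a3) z \<tau> - a1 + a4) / b1"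

definition Vf :: "real \<Rightarrow> real \<Rightarrow> real \<Rightarrow> real \<Rightarrow> real" where
  "Vf a2 a3 z \<tau> = V1 (cpar a2 a3) z \<tau> - a3"

definition leftState ::
  "real \<Rightarrow> real \<Rightarrow> real \<Rightarrow> real \<Rightarrow> real \<Rightarrow> real \<times> real \<times> real \<Rightarrow> real \<times> real" where
  "leftState a1 a2 a3 a4 b1 q = (case q of (z, \<tau>, Y) \<Rightarrow>
      (Uf a1 a2 a3 a4 b1 z \<tau> + z * Y / 2, Vf a2 a3 z \<tau> + Y / 2))"

definition rightState ::
  "real \<Rightarrow> real \<Rightarrow> real \<Rightarrow> real \<Rightarrow> real \<Rightarrow> real \<times> real \<times> real \<Rightarrow> real \<times> real" where
  "rightState a1 a2 a3 a4 b1 q = (case q of (z, \<tau>, Y) \<Rightarrow>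
      (Uf a1 a2 a3 a4 b1 z \<tau> - z * Y / 2, Vf a2 a3 z \<tau> - Y / 2))"

definition Hset ::
  "real \<Rightarrow> real \<Rightarrow> real \<Rightarrow> real \<Rightarrow> real \<Rightarrow> real \<times> real \<times> real \<Rightarrow> (real \<times> real \<times> real) set" where
  "Hset a1 a2 a3 a4 b1 p = {q. leftState a1 a2 a3 a4 b1 q = leftState a1 a2 a3 a4 b1 p}"

definition charPlane :: "(real \<times> real \<times> real) set" where
  "charPlane = {(z, \<tau>, Y). Y = 0}"

definition coincCurve :: "(real \<times> real \<times> real) set" where
  "coincCurve = {(z, \<tau>, Y). Y = 0 \<and> \<tau> = 0}"

end

theory Submission
  imports Defs
begin

text \<open>Eliminating \<open>Y\<close> from \<open>W(q) = W(p)\<close> determines \<open>\<tau>\<close> along \<open>\<H>(p)\<close> as a rational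
function of \<open>z\<close>, and then \<open>Y = -2c Q(z) / (1 + (b\<^sub>1 - 1) z\<^sup>2)\<close> for a quadratic \<open>Q\<close> with
\<open>(1 + z\<^sub>0\<^sup>2) Q(z) = (z - z\<^sub>0)(D z - N)\<close>, where \<open>D = \<tau>\<^sub>0 z\<^sub>0 (1 + z\<^sub>0\<^sup>2) + 1\<close> and
\<open>N = z\<^sub>0 - \<tau>\<^sub>0 (1 + z\<^sub>0\<^sup>2)\<close>. So \<open>\<H>(p) \<inter> \<C>\<close> is cut out by the roots of \<open>Q\<close>; the second root
\<open>N / D\<close> coincides with \<open>z\<^sub>0\<close> exactly when \<open>\<tau>\<^sub>0 = 0\<close> and is at infinity when \<open>D = 0\<close>, and
\<open>Q'(z\<^sub>0) = \<tau>\<^sub>0 (1 + z\<^sub>0\<^sup>2)\<close> gives the slope of \<open>Y\<close> at \<open>p\<close>.\<close>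

definition hugoniot_tau :: "real \<Rightarrow> real \<Rightarrow> real \<Rightarrow> real \<Rightarrow> real" where
  "hugoniot_tau b1 z0 \<tau>0 z =
     ((2 - b1) * z / (z\<^sup>2 + 1) + b1 * z * V1 1 z0 \<tau>0 - Utilde 1 z0 \<tau>0) / (1 + (b1 - 1) * z\<^sup>2)"

definition hugoniot_quad :: "real \<Rightarrow> real \<Rightarrow> real \<Rightarrow> real" where
  "hugoniot_quad z0 \<tau>0 z = V1 1 z0 \<tau>0 * z\<^sup>2 - Utilde 1 z0 \<tau>0 * z + 1 - V1 1 z0 \<tau>0"

definition hugoniot_Y :: "real \<Rightarrow> real \<Rightarrow> real \<Rightarrow> real \<Rightarrow> real \<Rightarrow> real" where
  "hugoniot_Y c b1 z0 \<tau>0 z = - 2 * c * hugoniot_quad z0 \<tau>0 z / (1 + (b1 - 1) * z\<^sup>2)"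

definition crossing_den :: "real \<Rightarrow> real \<Rightarrow> real" where
  "crossing_den z0 \<tau>0 = \<tau>0 * z0 * (1 + z0\<^sup>2) + 1"

definition crossing_num :: "real \<Rightarrow> real \<Rightarrow> real" where
  "crossing_num z0 \<tau>0 = - (\<tau>0 * (1 + z0\<^sup>2) - z0)"

lemma Utilde_scale: "Utilde c z \<tau> = c * Utilde 1 z \<tau>"
  unfolding Utilde_def by (simp add: field_simps)

lemma V1_scale: "V1 c z \<tau> = c * V1 1 z \<tau>"
  unfolding V1_def by (simp add: field_simps)

lemma sq_plus_one_pos: "(z::real)\<^sup>2 + 1 > 0"
  by (simp add: add_nonneg_pos)

lemma weight_pos: "(b1::real) > 1 \<Longrightarrow> 1 + (b1 - 1) * z\<^sup>2 > 0"
  by (simp add: add_pos_nonneg)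

lemma leftState_eq_iff:
  assumes "b1 \<noteq> 0"
  shows "leftState a1 a2 a3 a4 b1 (z, \<tau>, Y) = leftState a1 a2 a3 a4 b1 (z0, \<tau>0, 0) \<longleftrightarrow>
           Y = 2 * (a3 - a2) * (V1 1 z0 \<tau>0 - V1 1 z \<tau>)
         \<and> (a3 - a2) * Utilde 1 z \<tau> + b1 * z * Y / 2 = (a3 - a2) * Utilde 1 z0 \<tau>0"
  using assms unfolding leftState_def Uf_def Vf_def cpar_def
  by (subst (1 2) Utilde_scale, subst (1 2) V1_scale) (auto simp: field_simps)

lemma Utilde_1_eq: "Utilde 1 z \<tau> = 2 * z * (1 / (z\<^sup>2 + 1)) + \<tau> * (z\<^sup>2 - 1)"
  unfolding Utilde_def by simp

lemma V1_1_eq: "V1 1 z \<tau> = 1 / (z\<^sup>2 + 1) + \<tau> * z"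
  unfolding V1_def by simp

lemma hugoniot_tau_iff:
  assumes "b1 > 1"
  shows "Utilde 1 z \<tau> + b1 * z * (V1 1 z0 \<tau>0 - V1 1 z \<tau>) = Utilde 1 z0 \<tau>0
           \<longleftrightarrow> \<tau> = hugoniot_tau b1 z0 \<tau>0 z"
proof -
  define r where "r = 1 / (z\<^sup>2 + 1)"
  have "Utilde 1 z \<tau> + b1 * z * (V1 1 z0 \<tau>0 - V1 1 z \<tau>)
          = (2 - b1) * z * r - \<tau> * (1 + (b1 - 1) * z\<^sup>2) + b1 * z * V1 1 z0 \<tau>0"
    unfolding Utilde_1_eq[of z] V1_1_eq[of z] r_def[symmetric]
    by (simp add: algebra_simps power2_eq_square)
  then show ?thesis
    unfolding hugoniot_tau_def r_def using weight_pos[OF assms, of z] by (auto simp: field_simps)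
qed

lemma hugoniot_tau_base: "b1 > 1 \<Longrightarrow> hugoniot_tau b1 z0 \<tau>0 z0 = \<tau>0"
  using hugoniot_tau_iff[of b1 z0 \<tau>0 z0 \<tau>0] by simp

lemma hugoniot_Y_eq:
  assumes "b1 > 1"
  shows "2 * c * (V1 1 z0 \<tau>0 - V1 1 z (hugoniot_tau b1 z0 \<tau>0 z)) = hugoniot_Y c b1 z0 \<tau>0 z"
proof -
  define r where "r = 1 / (z\<^sup>2 + 1)"
  define u0 where "u0 = Utilde 1 z0 \<tau>0"
  define v0 where "v0 = V1 1 z0 \<tau>0"
  define W where "W = 1 + (b1 - 1) * z\<^sup>2"
  define N where "N = (2 - b1) * z * r + b1 * z * v0 - u0"
  have W: "W \<noteq> 0" unfolding W_def using weight_pos[OF assms, of z] by simp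
  have r: "r * (z\<^sup>2 + 1) = 1" unfolding r_def using sq_plus_one_pos[of z] by simp
  have Q: "hugoniot_quad z0 \<tau>0 z = v0 * z\<^sup>2 - u0 * z + 1 - v0"
    unfolding hugoniot_quad_def u0_def v0_def ..
  have "hugoniot_tau b1 z0 \<tau>0 z = N / W"
    unfolding hugoniot_tau_def N_def W_def r_def u0_def v0_def by simp
  then have V: "V1 1 z (hugoniot_tau b1 z0 \<tau>0 z) = r + z * N / W"
    unfolding V1_1_eq r_def by simp
  have "(v0 - r) * W - z * N = - hugoniot_quad z0 \<tau>0 z + (1 - r * (z\<^sup>2 + 1))"
    unfolding Q W_def N_def by (simp add: algebra_simps power2_eq_square)
  then have num: "(v0 - r) * W - z * N = - hugoniot_quad z0 \<tau>0 z"
    using r by simp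
  have "v0 - (r + z * N / W) = ((v0 - r) * W - z * N) / W"
    using W by (simp add: field_simps)
  then have "v0 - (r + z * N / W) = - hugoniot_quad z0 \<tau>0 z / W"
    unfolding num .
  then show ?thesis
    unfolding hugoniot_Y_def V v0_def[symmetric] W_def[symmetric] by simp
qed

lemma mem_Hset_iff:
  assumes b: "b1 > 1" and c: "a3 - a2 \<noteq> 0"
  shows "(z, \<tau>, Y) \<in> Hset a1 a2 a3 a4 b1 (z0, \<tau>0, 0) \<longleftrightarrow>
           \<tau> = hugoniot_tau b1 z0 \<tau>0 z \<and> Y = hugoniot_Y (a3 - a2) b1 z0 \<tau>0 z"
proof -
  define dV where "dV = V1 1 z0 \<tau>0 - V1 1 z \<tau>"
  have "(z, \<tau>, Y) \<in> Hset a1 a2 a3 a4 b1 (z0, \<tau>0, 0) \<longleftrightarrow>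
          Y = 2 * (a3 - a2) * dV
        \<and> (a3 - a2) * Utilde 1 z \<tau> + b1 * z * Y / 2 = (a3 - a2) * Utilde 1 z0 \<tau>0"
    unfolding Hset_def dV_def using leftState_eq_iff[of b1] b by simp
  also have "\<dots> \<longleftrightarrow> Y = 2 * (a3 - a2) * dV \<and> Utilde 1 z \<tau> + b1 * z * dV = Utilde 1 z0 \<tau>0"
  proof (cases "Y = 2 * (a3 - a2) * dV")
    case True
    then have "(a3 - a2) * Utilde 1 z \<tau> + b1 * z * Y / 2 = (a3 - a2) * (Utilde 1 z \<tau> + b1 * z * dV)"
      unfolding True by (simp add: field_simps)
    then show ?thesis using c True by auto
  qed simp
  also have "\<dots> \<longleftrightarrow> \<tau> = hugoniot_tau b1 z0 \<tau>0 z \<and> Y = hugoniot_Y (a3 - a2) b1 z0 \<tau>0 z"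
    unfolding dV_def hugoniot_tau_iff[OF b] using hugoniot_Y_eq[OF b, of "a3 - a2" z0 \<tau>0 z] by auto
  finally show ?thesis .
qed

lemma Hset_eq_graph:
  assumes "b1 > 1" and "a3 - a2 \<noteq> 0"
  shows "Hset a1 a2 a3 a4 b1 (z0, \<tau>0, 0)
           = range (\<lambda>z. (z, hugoniot_tau b1 z0 \<tau>0 z, hugoniot_Y (a3 - a2) b1 z0 \<tau>0 z))"
  using mem_Hset_iff[OF assms] by auto

lemma hugoniot_quad_factor:
  "(1 + z0\<^sup>2) * hugoniot_quad z0 \<tau>0 z
     = (z - z0) * (crossing_den z0 \<tau>0 * z - crossing_num z0 \<tau>0)"
proof -
  define r where "r = 1 / (z0\<^sup>2 + 1)"
  have r: "r * (z0\<^sup>2 + 1) = 1" unfolding r_def using sq_plus_one_pos[of z0] by simp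
  have "(1 + z0\<^sup>2) * hugoniot_quad z0 \<tau>0 z
          = (z - z0) * (crossing_den z0 \<tau>0 * z - crossing_num z0 \<tau>0)
            + (r * (z0\<^sup>2 + 1) - 1) * (z\<^sup>2 - 2 * z0 * z - 1)"
    unfolding hugoniot_quad_def Utilde_1_eq V1_1_eq crossing_den_def crossing_num_def r_def[symmetric]
    by (simp add: algebra_simps power2_eq_square)
  then show ?thesis using r by simp
qed

lemma hugoniot_quad_has_derivative:
  "(hugoniot_quad z0 \<tau>0 has_real_derivative \<tau>0 * (1 + z0\<^sup>2)) (at z0)"
proof -
  have "(hugoniot_quad z0 \<tau>0 has_real_derivative 2 * V1 1 z0 \<tau>0 * z0 - Utilde 1 z0 \<tau>0) (at z0)"
    unfolding hugoniot_quad_def[abs_def] by (auto intro!: derivative_eq_intros)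
  moreover have "2 * V1 1 z0 \<tau>0 * z0 - Utilde 1 z0 \<tau>0 = \<tau>0 * (1 + z0\<^sup>2)"
    unfolding Utilde_1_eq V1_1_eq by (simp add: algebra_simps power2_eq_square)
  ultimately show ?thesis by simp
qed

lemma hugoniot_quad_base: "hugoniot_quad z0 \<tau>0 z0 = 0"
  using hugoniot_quad_factor[of z0 \<tau>0 z0] sq_plus_one_pos[of z0] by (simp add: add.commute)

lemma hugoniot_Y_has_derivative:
  assumes "b1 > 1"
  shows "(hugoniot_Y c b1 z0 \<tau>0 has_real_derivative
           - 2 * c * \<tau>0 * (1 + z0\<^sup>2) / (1 + (b1 - 1) * z0\<^sup>2)) (at z0)"
proof -
  define W where "W = 1 + (b1 - 1) * z0\<^sup>2"
  have W: "W \<noteq> 0" unfolding W_def using weight_pos[OF assms, of z0] by simp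
  have num: "((\<lambda>z. - 2 * c * hugoniot_quad z0 \<tau>0 z) has_real_derivative
               - 2 * c * (\<tau>0 * (1 + z0\<^sup>2))) (at z0)"
    by (intro DERIV_cmult hugoniot_quad_has_derivative)
  have den: "((\<lambda>z. 1 + (b1 - 1) * z\<^sup>2) has_real_derivative (b1 - 1) * (2 * z0)) (at z0)"
    by (auto intro!: derivative_eq_intros)
  from DERIV_divide[OF num den] W
  have "(hugoniot_Y c b1 z0 \<tau>0 has_real_derivative
          (- 2 * c * (\<tau>0 * (1 + z0\<^sup>2)) * W
            - - 2 * c * hugoniot_quad z0 \<tau>0 z0 * ((b1 - 1) * (2 * z0))) / (W * W)) (at z0)"
    unfolding hugoniot_Y_def[abs_def] W_def by simp
  then show ?thesis
    unfolding hugoniot_quad_base W_def[symmetric] using W by (simp add: mult.assoc)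
qed

lemma hugoniot_Y_eq_0_iff:
  assumes "b1 > 1" and "c \<noteq> 0"
  shows "hugoniot_Y c b1 z0 \<tau>0 z = 0 \<longleftrightarrow> z = z0 \<or> crossing_den z0 \<tau>0 * z = crossing_num z0 \<tau>0"
proof -
  have "hugoniot_Y c b1 z0 \<tau>0 z = 0 \<longleftrightarrow> (1 + z0\<^sup>2) * hugoniot_quad z0 \<tau>0 z = 0"
    unfolding hugoniot_Y_def using assms weight_pos[OF assms(1), of z] sq_plus_one_pos[of z0]
    by (simp add: add.commute)
  then show ?thesis unfolding hugoniot_quad_factor by simp
qed

lemma mem_Hset_inter_charPlane_iff:
  assumes "b1 > 1" and "a3 - a2 \<noteq> 0"
  shows "q \<in> Hset a1 a2 a3 a4 b1 (z0, \<tau>0, 0) \<inter> charPlane \<longleftrightarrow>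
           (\<exists>z. q = (z, hugoniot_tau b1 z0 \<tau>0 z, 0)
              \<and> (z = z0 \<or> crossing_den z0 \<tau>0 * z = crossing_num z0 \<tau>0))"
  using mem_Hset_iff[OF assms] hugoniot_Y_eq_0_iff[OF assms]
  unfolding charPlane_def by (cases q) auto

lemma crossing_num_ne_0_if_den_eq_0: "crossing_den z0 \<tau>0 = 0 \<Longrightarrow> crossing_num z0 \<tau>0 \<noteq> 0"
proof
  assume den: "crossing_den z0 \<tau>0 = 0" and "crossing_num z0 \<tau>0 = 0"
  then have num: "\<tau>0 * (1 + z0\<^sup>2) = z0"
    unfolding crossing_num_def by simp
  from den have "z0 * (\<tau>0 * (1 + z0\<^sup>2)) + 1 = 0"
    unfolding crossing_den_def by (simp add: mult_ac)
  then have "z0\<^sup>2 + 1 = 0" unfolding num by (simp add: power2_eq_square)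
  then show False using sq_plus_one_pos[of z0] by simp
qed

lemma crossing_root_ne_base:
  assumes "\<tau>0 \<noteq> 0" and "crossing_den z0 \<tau>0 \<noteq> 0"
  shows "crossing_num z0 \<tau>0 / crossing_den z0 \<tau>0 \<noteq> z0"
proof
  assume "crossing_num z0 \<tau>0 / crossing_den z0 \<tau>0 = z0"
  then have "crossing_num z0 \<tau>0 - crossing_den z0 \<tau>0 * z0 = 0"
    using assms(2) by (simp add: field_simps)
  moreover have "crossing_num z0 \<tau>0 - crossing_den z0 \<tau>0 * z0 = - \<tau>0 * (1 + z0\<^sup>2)\<^sup>2"
    unfolding crossing_den_def crossing_num_def by (simp add: algebra_simps power2_eq_square)
  ultimately show False
    using assms(1) sq_plus_one_pos[of z0] by (simp add: add.commute)
qed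

lemma Hset_inter_charPlane_eq_singleton:
  assumes "b1 > 1" and "a3 - a2 \<noteq> 0" and "\<tau>0 = 0 \<or> crossing_den z0 \<tau>0 = 0"
  shows "Hset a1 a2 a3 a4 b1 (z0, \<tau>0, 0) \<inter> charPlane = {(z0, \<tau>0, 0)}"
proof -
  have "z = z0" if "crossing_den z0 \<tau>0 * z = crossing_num z0 \<tau>0" for z
    using assms(3) that crossing_num_ne_0_if_den_eq_0[of z0 \<tau>0]
    unfolding crossing_den_def crossing_num_def by auto
  then have "q \<in> Hset a1 a2 a3 a4 b1 (z0, \<tau>0, 0) \<inter> charPlane \<longleftrightarrow> q = (z0, \<tau>0, 0)" for q
    unfolding mem_Hset_inter_charPlane_iff[OF assms(1,2)] using hugoniot_tau_base[OF assms(1)] by auto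
  then show ?thesis by blast
qed

lemma Hset_inter_charPlane_eq_pair:
  assumes "b1 > 1" and "a3 - a2 \<noteq> 0" and D: "crossing_den z0 \<tau>0 \<noteq> 0"
  defines "z1 \<equiv> crossing_num z0 \<tau>0 / crossing_den z0 \<tau>0"
  shows "Hset a1 a2 a3 a4 b1 (z0, \<tau>0, 0) \<inter> charPlane
           = {(z0, \<tau>0, 0), (z1, hugoniot_tau b1 z0 \<tau>0 z1, 0)}"
proof -
  have "crossing_den z0 \<tau>0 * z = crossing_num z0 \<tau>0 \<longleftrightarrow> z = z1" for z
    unfolding z1_def using D by (auto simp: field_simps)
  then have "q \<in> Hset a1 a2 a3 a4 b1 (z0, \<tau>0, 0) \<inter> charPlane \<longleftrightarrow>
               q = (z0, \<tau>0, 0) \<or> q = (z1, hugoniot_tau b1 z0 \<tau>0 z1, 0)" for q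
    unfolding mem_Hset_inter_charPlane_iff[OF assms(1,2)] using hugoniot_tau_base[OF assms(1)] by auto
  then show ?thesis by blast
qed

theorem mainTheorem2:
  fixes a1 a2 a3 a4 b1 z0 \<tau>0 :: real
  assumes "b1 > 1" and "a3 - a2 > 0"
  shows
   "(Hset a1 a2 a3 a4 b1 (z0, \<tau>0, 0) \<inter> charPlane = {(z0, \<tau>0, 0)}
       \<and> \<tau>0 * z0 * (1 + z0\<^sup>2) + 1 \<noteq> 0
      \<longleftrightarrow> (z0, \<tau>0, 0) \<in> coincCurve)
    \<and> ((z0, \<tau>0, 0) \<in> coincCurve \<longleftrightarrow> \<tau>0 = 0)
    \<and> (\<tau>0 = 0 \<longrightarrow>
        Hset a1 a2 a3 a4 b1 (z0, \<tau>0, 0) \<inter> charPlane = {(z0, \<tau>0, 0)}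
        \<and> (\<exists>\<tau>f Yf. Hset a1 a2 a3 a4 b1 (z0, \<tau>0, 0) = range (\<lambda>z. (z, \<tau>f z, Yf z))
               \<and> (Yf has_real_derivative 0) (at z0)))
    \<and> (\<tau>0 \<noteq> 0 \<longrightarrow>
        (\<tau>0 * z0 * (1 + z0\<^sup>2) + 1 \<noteq> 0 \<longrightarrow>
           (\<exists>\<tau>1. Hset a1 a2 a3 a4 b1 (z0, \<tau>0, 0) \<inter> charPlane
                    = {(z0, \<tau>0, 0),
                       (- (\<tau>0 * (1 + z0\<^sup>2) - z0) / (\<tau>0 * z0 * (1 + z0\<^sup>2) + 1), \<tau>1, 0)}
                 \<and> - (\<tau>0 * (1 + z0\<^sup>2) - z0) / (\<tau>0 * z0 * (1 + z0\<^sup>2) + 1) \<noteq> z0))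
        \<and> (\<tau>0 * z0 * (1 + z0\<^sup>2) + 1 = 0 \<longrightarrow>
           Hset a1 a2 a3 a4 b1 (z0, \<tau>0, 0) \<inter> charPlane = {(z0, \<tau>0, 0)})
        \<and> (\<exists>\<tau>f Yf. Hset a1 a2 a3 a4 b1 (z0, \<tau>0, 0) = range (\<lambda>z. (z, \<tau>f z, Yf z))
               \<and> (Yf has_real_derivative
                    (- 2 * (a3 - a2) * \<tau>0 * (1 + z0\<^sup>2) / (1 + (b1 - 1) * z0\<^sup>2))) (at z0)))"
proof -
  have c: "a3 - a2 \<noteq> 0" using assms(2) by simp
  let ?H = "Hset a1 a2 a3 a4 b1 (z0, \<tau>0, 0)"
  let ?D = "crossing_den z0 \<tau>0" and ?N = "crossing_num z0 \<tau>0"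
  let ?slope = "- 2 * (a3 - a2) * \<tau>0 * (1 + z0\<^sup>2) / (1 + (b1 - 1) * z0\<^sup>2)"
  have coinc: "(z0, \<tau>0, 0) \<in> coincCurve \<longleftrightarrow> \<tau>0 = 0"
    unfolding coincCurve_def by simp
  have graph: "\<exists>\<tau>f Yf. ?H = range (\<lambda>z. (z, \<tau>f z, Yf z)) \<and> (Yf has_real_derivative ?slope) (at z0)"
    using Hset_eq_graph[OF assms(1) c] hugoniot_Y_has_derivative[OF assms(1)] by blast
  have single: "?H \<inter> charPlane = {(z0, \<tau>0, 0)}" if "\<tau>0 = 0 \<or> ?D = 0"
    using Hset_inter_charPlane_eq_singleton[OF assms(1) c that] .
  have pair: "\<exists>\<tau>1. ?H \<inter> charPlane = {(z0, \<tau>0, 0), (?N / ?D, \<tau>1, 0)} \<and> ?N / ?D \<noteq> z0"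
    if "\<tau>0 \<noteq> 0" and "?D \<noteq> 0"
    using Hset_inter_charPlane_eq_pair[OF assms(1) c that(2)] crossing_root_ne_base[OF that] by blast
  have not_single: "?H \<inter> charPlane \<noteq> {(z0, \<tau>0, 0)}" if "\<tau>0 \<noteq> 0" and "?D \<noteq> 0"
    using pair[OF that] by (metis doubleton_eq_iff insert_absorb2 prod.inject)
  have isolated_iff: "?H \<inter> charPlane = {(z0, \<tau>0, 0)} \<and> ?D \<noteq> 0 \<longleftrightarrow> \<tau>0 = 0"
  proof
    show "\<tau>0 = 0" if "?H \<inter> charPlane = {(z0, \<tau>0, 0)} \<and> ?D \<noteq> 0"
      using not_single that by blast
    show "?H \<inter> charPlane = {(z0, \<tau>0, 0)} \<and> ?D \<noteq> 0" if "\<tau>0 = 0"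
      using single that unfolding crossing_den_def by simp
  qed
  have tangent: "\<exists>\<tau>f Yf. ?H = range (\<lambda>z. (z, \<tau>f z, Yf z)) \<and> (Yf has_real_derivative 0) (at z0)"
    if "\<tau>0 = 0"
    using graph that by simp
  show ?thesis
    unfolding crossing_den_def[symmetric] crossing_num_def[symmetric] coinc
    using isolated_iff single pair tangent graph by blast
qed

end
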